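(* Let $I\subset F$ be a graded two-sided ideal and $J=L(I)\subset R$. For every $d\ge0$, $\iota(I_d)=J(d)_d$, where $J(d)=J\cap R(d)$. In particular $\dim_{\mathbb K}I_d=\dim_{\mathbb K}J(d)_d$.
   Context: Let $\mathbb K$ be a field and $F=\mathbb K\langle x_1,\dots,x_n\rangle$ the free associative algebra with standard grading; $I_d=I\cap F_d$. Let $P=\mathbb K[x_{ij}\mid 1\le i\le n,\ j\ge1]$ be the commutative polynomial ring with $\deg x_{ij}=1$, $Q\subset P$ the ideal generated by all $x_{ij}x_{kj}$ ($1\le i,k\le n$, $j\ge1$), and $R=P/Q$. Let $\sigma:R\to R$ be the algebra endomorphism $x_{ij}\mapsto x_{i,j+1}$. Let $\iota:F\to R$ be the $\mathbb K$-linear map sending each word $x_{i_1}\cdots x_{i_d}$ to $x_{i_1 1}x_{i_2 2}\cdots x_{i_d d}$. For $d\ge0$, $R(d)$ is the subalgebra of $R$ generated by the $x_{ij}$ with $j\le d$ (i.e. $P(d)/(Q\cap P(d))$ with $P(d)=\mathbb K[x_{ij}\mid j\le d]$). For a graded two-sided ideal $I\subset F$, its letterplace analogue $L(I)$ is the ideal of $R$ generated by $\bigcup_{k\ge0}\sigma^k(\iota(I))$. *)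

theory Defs
  imports "HOL-Library.Poly_Mapping"
begin

text \<open>Elements of F: finitely supported K-valued functions on words; a word
  x_{i_1}...x_{i_d} is the list [i_1,...,i_d] with letters in {1..n}.\<close>

type_synonym 'k freealg = "nat list \<Rightarrow>\<^sub>0 'k"

definition F_set :: "nat \<Rightarrow> 'k::field freealg set" where
  "F_set n = {f. \<forall>w \<in> Poly_Mapping.keys f. set w \<subseteq> {1..n}}"

definition fmul :: "'k::field freealg \<Rightarrow> 'k freealg \<Rightarrow> 'k freealg" where
  "fmul f g = (\<Sum>u\<in>Poly_Mapping.keys f. \<Sum>v\<in>Poly_Mapping.keys g.
                 Poly_Mapping.single (u @ v) (Poly_Mapping.lookup f u * Poly_Mapping.lookup g v))"

definition F_homog :: "nat \<Rightarrow> 'k::field freealg \<Rightarrow> bool" where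
  "F_homog d f \<longleftrightarrow> (\<forall>w \<in> Poly_Mapping.keys f. length w = d)"

definition F_component :: "nat \<Rightarrow> 'k::field freealg \<Rightarrow> 'k freealg" where
  "F_component d f = (\<Sum>w\<in>{w \<in> Poly_Mapping.keys f. length w = d}.
                        Poly_Mapping.single w (Poly_Mapping.lookup f w))"

definition graded_ideal_F :: "nat \<Rightarrow> 'k::field freealg set \<Rightarrow> bool" where
  "graded_ideal_F n I \<longleftrightarrow>
     I \<subseteq> F_set n \<and> 0 \<in> I \<and>
     (\<forall>f\<in>I. \<forall>g\<in>I. f + g \<in> I) \<and>
     (\<forall>a\<in>F_set n. \<forall>f\<in>I. fmul a f \<in> I \<and> fmul f a \<in> I) \<and>
     (\<forall>f\<in>I. \<forall>d. F_component d f \<in> I)"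

definition ideal_deg :: "'k::field freealg set \<Rightarrow> nat \<Rightarrow> 'k freealg set" where
  "ideal_deg I d = {f \<in> I. F_homog d f}"

text \<open>Polynomials in variables x_{ij} indexed by pairs (i,j); a monomial is a
  finitely supported exponent vector.\<close>

type_synonym 'k lpoly = "((nat \<times> nat) \<Rightarrow>\<^sub>0 nat) \<Rightarrow>\<^sub>0 'k"

definition var :: "nat \<Rightarrow> nat \<Rightarrow> 'k::field lpoly" where
  "var i j = Poly_Mapping.single (Poly_Mapping.single (i, j) 1) 1"

definition P_set :: "nat \<Rightarrow> 'k::field lpoly set" where
  "P_set n = {p. \<forall>m \<in> Poly_Mapping.keys p. \<forall>v \<in> Poly_Mapping.keys m.
                   1 \<le> fst v \<and> fst v \<le> n \<and> 1 \<le> snd v}"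

definition Pd_set :: "nat \<Rightarrow> nat \<Rightarrow> 'k::field lpoly set" where
  "Pd_set n d = {p \<in> P_set n. \<forall>m \<in> Poly_Mapping.keys p. \<forall>v \<in> Poly_Mapping.keys m. snd v \<le> d}"

definition P_homog :: "nat \<Rightarrow> 'k::field lpoly \<Rightarrow> bool" where
  "P_homog d p \<longleftrightarrow> (\<forall>m \<in> Poly_Mapping.keys p. (\<Sum>v\<in>Poly_Mapping.keys m. Poly_Mapping.lookup m v) = d)"

inductive_set ideal_gen :: "'a::comm_ring_1 set \<Rightarrow> 'a set \<Rightarrow> 'a set" for C S where
  gen_zero: "0 \<in> ideal_gen C S"
| gen_base: "s \<in> S \<Longrightarrow> s \<in> ideal_gen C S"
| gen_add:  "a \<in> ideal_gen C S \<Longrightarrow> b \<in> ideal_gen C S \<Longrightarrow> a + b \<in> ideal_gen C S"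
| gen_mult: "r \<in> C \<Longrightarrow> a \<in> ideal_gen C S \<Longrightarrow> r * a \<in> ideal_gen C S"

definition Q_ideal :: "nat \<Rightarrow> 'k::field lpoly set" where
  "Q_ideal n = ideal_gen (P_set n)
     {var i j * var k j | i k j. 1 \<le> i \<and> i \<le> n \<and> 1 \<le> k \<and> k \<le> n \<and> 1 \<le> j}"

text \<open>Elements of R = P/Q are represented by their representatives in P;
  two representatives p, q give the same element of R iff p - q \<in> Q.\<close>

text \<open>The shift endomorphism x_ij \<mapsto> x_{i,j+1} on P (it preserves Q, hence
  induces sigma on R).\<close>
definition mono_shift :: "((nat \<times> nat) \<Rightarrow>\<^sub>0 nat) \<Rightarrow> ((nat \<times> nat) \<Rightarrow>\<^sub>0 nat)" where
  "mono_shift m = (\<Sum>v\<in>Poly_Mapping.keys m. Poly_Mapping.single (fst v, Suc (snd v)) (Poly_Mapping.lookup m v))"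

definition sigma :: "'k::field lpoly \<Rightarrow> 'k lpoly" where
  "sigma p = (\<Sum>m\<in>Poly_Mapping.keys p. Poly_Mapping.single (mono_shift m) (Poly_Mapping.lookup p m))"

definition word_mono :: "nat list \<Rightarrow> ((nat \<times> nat) \<Rightarrow>\<^sub>0 nat)" where
  "word_mono w = (\<Sum>k<length w. Poly_Mapping.single (w ! k, Suc k) 1)"

definition iota :: "'k::field freealg \<Rightarrow> 'k lpoly" where
  "iota f = (\<Sum>w\<in>Poly_Mapping.keys f. Poly_Mapping.single (word_mono w) (Poly_Mapping.lookup f w))"

text \<open>Preimage in P of the letterplace ideal L(I) \<subseteq> R: the ideal of P generated
  by Q together with all sigma^k(iota(I)).\<close>
definition L_preimage :: "nat \<Rightarrow> 'k::field freealg set \<Rightarrow> 'k lpoly set" where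
  "L_preimage n I = ideal_gen (P_set n)
     (Q_ideal n \<union> (\<Union>k. (sigma ^^ k) ` iota ` I))"

end

theory Submission
  imports Defs
begin

text \<open>Call \<open>\<iota>(w) = x\<^bsub>w\<^sub>1,1\<^esub> \<cdots> x\<^bsub>w\<^sub>d,d\<^esub>\<close> a word monomial.  Word monomials are exactly the
  monomials of degree \<open>d\<close> in \<open>P(d)\<close> that are not divisible by any generator \<open>x\<^sub>i\<^sub>j x\<^sub>k\<^sub>j\<close>
  of \<open>Q\<close>.  Hence they never occur in elements of \<open>Q\<close> (which makes \<open>\<iota>\<close> injective modulo \<open>Q\<close>),
  and a polynomial that is congruent modulo \<open>Q\<close> both to an element of \<open>P(d)\<close> and to a
  homogeneous polynomial of degree \<open>d\<close> is congruent to its word part.  It therefore suffices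
  that the word part of every element of \<open>L(I)\<close> lies in \<open>\<iota>(I\<^sub>d)\<close>.  For a generator
  \<open>x\<^sup>\<alpha> \<sigma>\<^sup>k(\<iota>(g))\<close> this holds because a product \<open>x\<^sup>\<alpha> \<sigma>\<^sup>k(\<iota>(w))\<close> that is a word monomial
  equals \<open>\<iota>(u w u')\<close> for words \<open>u, u'\<close> depending only on \<open>\<alpha>\<close>, \<open>k\<close> and \<open>|w|\<close>; so the word
  part is \<open>\<iota>(c u g\<^sub>e u')\<close> with \<open>g\<^sub>e\<close> a homogeneous component of \<open>g\<close>.\<close>

section \<open>Finitely supported functions\<close>

definition push_keys :: "('a \<Rightarrow> 'b) \<Rightarrow> 'c::comm_ring_1 \<Rightarrow> ('a \<Rightarrow>\<^sub>0 'c) \<Rightarrow> ('b \<Rightarrow>\<^sub>0 'c)" where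
  "push_keys \<phi> c f =
     (\<Sum>x\<in>Poly_Mapping.keys f. Poly_Mapping.single (\<phi> x) (c * Poly_Mapping.lookup f x))"

lemma lookup_push_keys_image:
  assumes "inj \<phi>"
  shows "Poly_Mapping.lookup (push_keys \<phi> c f) (\<phi> y) = c * Poly_Mapping.lookup f y"
proof -
  have "Poly_Mapping.lookup (push_keys \<phi> c f) (\<phi> y) =
      (\<Sum>x\<in>Poly_Mapping.keys f. if x = y then c * Poly_Mapping.lookup f x else 0)"
    unfolding push_keys_def lookup_sum lookup_single using assms
    by (intro sum.cong) (auto simp: when_def dest: injD)
  then show ?thesis
    by (simp add: in_keys_iff)
qed

lemma lookup_push_keys_outside:
  assumes "m \<notin> range \<phi>"
  shows "Poly_Mapping.lookup (push_keys \<phi> c f) m = 0"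
  unfolding push_keys_def lookup_sum lookup_single using assms
  by (intro sum.neutral) (auto simp: when_def)

lemma lookup_push_keys:
  assumes "inj \<phi>"
  shows "Poly_Mapping.lookup (push_keys \<phi> c f) m =
     (if m \<in> range \<phi> then c * Poly_Mapping.lookup f (inv \<phi> m) else 0)"
  using lookup_push_keys_image[OF assms] lookup_push_keys_outside
  by (metis f_inv_into_f)

lemma push_keys_add:
  "inj \<phi> \<Longrightarrow> push_keys \<phi> c (a + b) = push_keys \<phi> c a + push_keys \<phi> c b"
  by (rule poly_mapping_eqI) (simp add: lookup_push_keys lookup_add distrib_left)

lemma push_keys_id: "push_keys (\<lambda>x. x) 1 f = f"
  by (rule poly_mapping_eqI) (simp add: lookup_push_keys)

lemma push_keys_compose:
  assumes "inj \<phi>" "inj \<psi>"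
  shows "push_keys \<phi> c (push_keys \<psi> c' f) = push_keys (\<phi> \<circ> \<psi>) (c * c') f"
proof (rule poly_mapping_eqI)
  fix m
  have inj: "inj (\<phi> \<circ> \<psi>)"
    using assms by (simp add: inj_compose)
  consider y where "m = \<phi> (\<psi> y)" | z where "m = \<phi> z" "z \<notin> range \<psi>" | "m \<notin> range \<phi>"
    by blast
  then show "Poly_Mapping.lookup (push_keys \<phi> c (push_keys \<psi> c' f)) m =
      Poly_Mapping.lookup (push_keys (\<phi> \<circ> \<psi>) (c * c') f) m"
  proof cases
    case 1
    then show ?thesis
      using lookup_push_keys_image[OF inj, of "c * c'" f y]
      by (simp add: lookup_push_keys_image assms mult.assoc)
  next
    case 2
    then have "m \<notin> range (\<phi> \<circ> \<psi>)"
      using injD[OF assms(1)] by auto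
    with 2 show ?thesis
      by (simp add: lookup_push_keys_image assms lookup_push_keys_outside)
  next
    case 3
    then have "m \<notin> range (\<phi> \<circ> \<psi>)"
      by auto
    with 3 show ?thesis
      by (simp add: lookup_push_keys_outside)
  qed
qed

lemma keys_push_keys_subset: "Poly_Mapping.keys (push_keys \<phi> c f) \<subseteq> \<phi> ` Poly_Mapping.keys f"
  unfolding push_keys_def by (rule order.trans[OF keys_sum]) auto

lemma poly_mapping_sum_single:
  "f = (\<Sum>x\<in>Poly_Mapping.keys f. Poly_Mapping.single x (Poly_Mapping.lookup f x))"
  by (rule poly_mapping_eqI) (simp add: lookup_sum lookup_single when_def in_keys_iff)

definition restrict_keys :: "'a set \<Rightarrow> ('a \<Rightarrow>\<^sub>0 'c::zero) \<Rightarrow> ('a \<Rightarrow>\<^sub>0 'c)" where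
  "restrict_keys W p = Abs_poly_mapping (\<lambda>m. if m \<in> W then Poly_Mapping.lookup p m else 0)"

lemma lookup_restrict_keys:
  "Poly_Mapping.lookup (restrict_keys W p) m = (if m \<in> W then Poly_Mapping.lookup p m else 0)"
proof -
  have "finite {m. (if m \<in> W then Poly_Mapping.lookup p m else 0) \<noteq> 0}"
    by (rule finite_subset[OF _ finite_keys[of p]]) (auto simp: in_keys_iff)
  then show ?thesis
    unfolding restrict_keys_def by simp
qed

lemma restrict_keys_add:
  "restrict_keys W (a + b) = restrict_keys W a + restrict_keys W (b :: 'a \<Rightarrow>\<^sub>0 'c::monoid_add)"
  by (rule poly_mapping_eqI) (simp add: lookup_restrict_keys lookup_add)

lemma restrict_keys_zero [simp]: "restrict_keys W 0 = 0"
  by (rule poly_mapping_eqI) (simp add: lookup_restrict_keys)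

lemma restrict_keys_sum:
  "restrict_keys W (sum g A) = (\<Sum>a\<in>A. restrict_keys W (g a :: 'a \<Rightarrow>\<^sub>0 'c::comm_monoid_add))"
  by (rule poly_mapping_eqI) (simp add: lookup_restrict_keys lookup_sum)

lemma restrict_keys_single:
  "restrict_keys W (Poly_Mapping.single m a) = (if m \<in> W then Poly_Mapping.single m a else 0)"
  by (rule poly_mapping_eqI) (simp add: lookup_restrict_keys lookup_single when_def)

lemma restrict_keys_eq_sum:
  "restrict_keys W p =
     (\<Sum>m\<in>{m \<in> Poly_Mapping.keys p. m \<in> W}. Poly_Mapping.single m (Poly_Mapping.lookup p m))"
  by (rule poly_mapping_eqI)
    (auto simp: lookup_restrict_keys lookup_sum lookup_single when_def in_keys_iff)

lemma diff_restrict_keys: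
  "p - restrict_keys W p = restrict_keys (- W) (p :: 'a \<Rightarrow>\<^sub>0 'c::ab_group_add)"
  by (rule poly_mapping_eqI) (simp add: lookup_restrict_keys lookup_minus)

section \<open>Monomials\<close>

definition valid_mono :: "nat \<Rightarrow> ((nat \<times> nat) \<Rightarrow>\<^sub>0 nat) \<Rightarrow> bool" where
  "valid_mono n m \<longleftrightarrow> (\<forall>v\<in>Poly_Mapping.keys m. 1 \<le> fst v \<and> fst v \<le> n \<and> 1 \<le> snd v)"

definition mono_deg :: "((nat \<times> nat) \<Rightarrow>\<^sub>0 nat) \<Rightarrow> nat" where
  "mono_deg m = (\<Sum>v\<in>Poly_Mapping.keys m. Poly_Mapping.lookup m v)"

lemma keys_add_nat:
  "Poly_Mapping.keys (a + b) = Poly_Mapping.keys a \<union> Poly_Mapping.keys (b :: 'a \<Rightarrow>\<^sub>0 nat)"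
  by (auto simp: in_keys_iff lookup_add)

lemma valid_mono_add: "valid_mono n (a + b) \<longleftrightarrow> valid_mono n a \<and> valid_mono n b"
  by (auto simp: valid_mono_def keys_add_nat)

lemma mono_deg_eq_sum:
  "finite A \<Longrightarrow> Poly_Mapping.keys m \<subseteq> A \<Longrightarrow> mono_deg m = (\<Sum>v\<in>A. Poly_Mapping.lookup m v)"
  unfolding mono_deg_def by (rule sum.mono_neutral_left) (auto simp: in_keys_iff)

lemma mono_deg_add: "mono_deg (a + b) = mono_deg a + mono_deg b"
proof -
  let ?A = "Poly_Mapping.keys a \<union> Poly_Mapping.keys b"
  have "mono_deg (a + b) = (\<Sum>v\<in>?A. Poly_Mapping.lookup (a + b) v)"
    by (rule mono_deg_eq_sum) (auto simp: keys_add_nat)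
  also have "\<dots> = (\<Sum>v\<in>?A. Poly_Mapping.lookup a v) + (\<Sum>v\<in>?A. Poly_Mapping.lookup b v)"
    by (simp add: lookup_add sum.distrib)
  also have "\<dots> = mono_deg a + mono_deg b"
    by (simp add: mono_deg_eq_sum[symmetric])
  finally show ?thesis .
qed

lemma mono_deg_zero [simp]: "mono_deg 0 = 0"
  by (simp add: mono_deg_def)

lemma mono_deg_sum: "mono_deg (sum g A) = (\<Sum>a\<in>A. mono_deg (g a))"
  by (induction A rule: infinite_finite_induct) (auto simp: mono_deg_add)

lemma mono_deg_single [simp]: "mono_deg (Poly_Mapping.single v c) = c"
  by (simp add: mono_deg_def)

lemma lookup_mono_shift:
  "Poly_Mapping.lookup (mono_shift m) v =
     (if snd v = 0 then 0 else Poly_Mapping.lookup m (fst v, snd v - 1))"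
proof -
  have "Poly_Mapping.lookup (mono_shift m) v =
      (\<Sum>u\<in>Poly_Mapping.keys m. if u = (fst v, snd v - 1) then
         (if snd v = 0 then 0 else Poly_Mapping.lookup m u) else 0)"
    unfolding mono_shift_def lookup_sum lookup_single
    by (intro sum.cong) (auto simp: when_def prod_eq_iff)
  then show ?thesis
    by (simp add: in_keys_iff)
qed

lemma lookup_funpow_mono_shift:
  "Poly_Mapping.lookup ((mono_shift ^^ k) m) v =
     (if snd v < k then 0 else Poly_Mapping.lookup m (fst v, snd v - k))"
  by (induction k arbitrary: v) (auto simp: lookup_mono_shift)

lemma keys_funpow_mono_shift:
  "v \<in> Poly_Mapping.keys ((mono_shift ^^ k) m) \<longleftrightarrow>
     k \<le> snd v \<and> (fst v, snd v - k) \<in> Poly_Mapping.keys m"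
  by (auto simp: in_keys_iff lookup_funpow_mono_shift)

lemma inj_funpow_mono_shift: "inj (mono_shift ^^ k)"
proof (rule injI)
  fix a b assume eq: "(mono_shift ^^ k) a = (mono_shift ^^ k) b"
  show "a = b"
  proof (rule poly_mapping_eqI)
    fix v :: "nat \<times> nat"
    have "Poly_Mapping.lookup ((mono_shift ^^ k) a) (fst v, snd v + k) =
        Poly_Mapping.lookup ((mono_shift ^^ k) b) (fst v, snd v + k)"
      using eq by simp
    then show "Poly_Mapping.lookup a v = Poly_Mapping.lookup b v"
      by (simp add: lookup_funpow_mono_shift)
  qed
qed

lemma funpow_mono_shift_add:
  "(mono_shift ^^ k) (a + b) = (mono_shift ^^ k) a + (mono_shift ^^ k) b"
  by (rule poly_mapping_eqI) (simp add: lookup_funpow_mono_shift lookup_add)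

lemma mono_deg_mono_shift: "mono_deg (mono_shift m) = mono_deg m"
  unfolding mono_shift_def mono_deg_sum mono_deg_single by (simp add: mono_deg_def)

lemma mono_deg_funpow_mono_shift: "mono_deg ((mono_shift ^^ k) m) = mono_deg m"
  by (induction k) (auto simp: mono_deg_mono_shift)

lemma valid_mono_funpow_mono_shift: "valid_mono n m \<Longrightarrow> valid_mono n ((mono_shift ^^ k) m)"
  by (fastforce simp: valid_mono_def keys_funpow_mono_shift)

lemma sigma_eq_push_keys: "sigma = push_keys mono_shift 1"
  by (rule ext) (simp add: sigma_def push_keys_def)

lemma funpow_sigma_eq_push_keys: "sigma ^^ k = push_keys (mono_shift ^^ k) 1"
proof (induction k)
  case 0
  show ?case
    by (simp add: push_keys_id id_def)
next
  case (Suc k)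
  have "push_keys mono_shift 1 (push_keys (mono_shift ^^ k) 1 p) = push_keys (mono_shift ^^ Suc k) 1 p"
    for p :: "'a lpoly"
    using push_keys_compose[OF inj_funpow_mono_shift[of 1] inj_funpow_mono_shift[of k], of 1 1 p]
    by simp
  with Suc show ?case
    by (simp add: sigma_eq_push_keys fun_eq_iff comp_def)
qed

lemma lookup_word_mono:
  "Poly_Mapping.lookup (word_mono w) v =
     (if 1 \<le> snd v \<and> snd v \<le> length w \<and> w ! (snd v - 1) = fst v then 1 else 0)"
proof -
  have "Poly_Mapping.lookup (word_mono w) v =
      (\<Sum>k<length w. if k = snd v - 1 then
         (if 1 \<le> snd v \<and> w ! (snd v - 1) = fst v then 1 else 0) else 0)"
    unfolding word_mono_def lookup_sum lookup_single
    by (intro sum.cong) (auto simp: when_def prod_eq_iff)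
  then show ?thesis
    by auto
qed

lemma keys_word_mono:
  "v \<in> Poly_Mapping.keys (word_mono w) \<longleftrightarrow>
     1 \<le> snd v \<and> snd v \<le> length w \<and> fst v = w ! (snd v - 1)"
  by (auto simp: in_keys_iff lookup_word_mono)

lemma mono_deg_word_mono: "mono_deg (word_mono w) = length w"
  by (simp add: word_mono_def mono_deg_sum)

lemma inj_word_mono: "inj word_mono"
proof (rule injI)
  fix a b assume eq: "word_mono a = word_mono b"
  then have length_eq: "length a = length b"
    by (metis mono_deg_word_mono)
  show "a = b"
  proof (rule nth_equalityI[OF length_eq])
    fix k assume "k < length a"
    then have "Poly_Mapping.lookup (word_mono b) (a ! k, Suc k) = 1"
      by (simp add: lookup_word_mono flip: eq)
    then show "a ! k = b ! k"
      by (simp add: lookup_word_mono split: if_splits)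
  qed
qed

lemma word_mono_append:
  "word_mono (a @ b) = word_mono a + (mono_shift ^^ length a) (word_mono b)"
proof (rule poly_mapping_eqI)
  fix v :: "nat \<times> nat"
  obtain i j where v: "v = (i, j)"
    by fastforce
  consider "j = 0" | "1 \<le> j" "j \<le> length a" | "length a < j"
    by linarith
  then show "Poly_Mapping.lookup (word_mono (a @ b)) v =
      Poly_Mapping.lookup (word_mono a + (mono_shift ^^ length a) (word_mono b)) v"
    by cases (auto simp: v lookup_add lookup_funpow_mono_shift lookup_word_mono nth_append)
qed

lemma valid_mono_word_mono: "valid_mono n (word_mono w) \<longleftrightarrow> set w \<subseteq> {1..n}"
proof
  assume valid: "valid_mono n (word_mono w)"
  show "set w \<subseteq> {1..n}"
  proof
    fix x assume "x \<in> set w"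
    then obtain i where "i < length w" "x = w ! i"
      by (auto simp: in_set_conv_nth)
    then have "(x, Suc i) \<in> Poly_Mapping.keys (word_mono w)"
      by (simp add: keys_word_mono)
    with valid show "x \<in> {1..n}"
      by (auto simp: valid_mono_def)
  qed
next
  assume letters: "set w \<subseteq> {1..n}"
  show "valid_mono n (word_mono w)"
    unfolding valid_mono_def
  proof
    fix v assume "v \<in> Poly_Mapping.keys (word_mono w)"
    then have v: "1 \<le> snd v" "snd v \<le> length w" "fst v = w ! (snd v - 1)"
      by (simp_all add: keys_word_mono)
    then have "fst v \<in> set w"
      by simp
    with letters v(1) show "1 \<le> fst v \<and> fst v \<le> n \<and> 1 \<le> snd v"
      by auto
  qed
qed

lemma iota_eq_push_keys: "iota = push_keys word_mono 1"
  by (rule ext) (simp add: iota_def push_keys_def)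

section \<open>The ideal \<open>Q\<close>\<close>

lemma P_set_eq: "P_set n = {p. \<forall>m\<in>Poly_Mapping.keys p. valid_mono n m}"
  by (auto simp: P_set_def valid_mono_def)

lemma P_set_mult: "p \<in> P_set n \<Longrightarrow> q \<in> P_set n \<Longrightarrow> p * q \<in> P_set n"
  unfolding P_set_eq using keys_mult[of p q] by (auto simp: valid_mono_add)

lemma P_set_one: "1 \<in> P_set n"
  by (simp add: P_set_def)

text \<open>The monomial \<open>m\<close> is divisible by a generator \<open>x\<^sub>i\<^sub>j x\<^sub>k\<^sub>j\<close> of \<open>Q\<close> (\<open>i = k\<close> allowed).\<close>

definition has_column_pair :: "((nat \<times> nat) \<Rightarrow>\<^sub>0 nat) \<Rightarrow> bool" where
  "has_column_pair m \<longleftrightarrow> (\<exists>i k j. \<forall>v.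
     Poly_Mapping.lookup (Poly_Mapping.single (i, j) 1 + Poly_Mapping.single (k, j) 1) v
       \<le> Poly_Mapping.lookup m v)"

lemma has_column_pair_add: "has_column_pair b \<Longrightarrow> has_column_pair (a + b)"
  unfolding has_column_pair_def lookup_add by (meson trans_le_add2)

lemma var_times_var:
  "var i j * var k j =
     Poly_Mapping.single (Poly_Mapping.single (i, j) 1 + Poly_Mapping.single (k, j) 1) 1"
  by (simp add: var_def mult_single)

lemma keys_Q_ideal_has_column_pair:
  assumes "q \<in> Q_ideal n" "m \<in> Poly_Mapping.keys q"
  shows "has_column_pair m"
proof -
  have "\<forall>m\<in>Poly_Mapping.keys q. has_column_pair m"
    using assms(1) unfolding Q_ideal_def
  proof induction
    case gen_zero
    then show ?case by simp
  next
    case (gen_base s)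
    then obtain i k j where "s = var i j * var k j"
      by blast
    moreover have "has_column_pair (Poly_Mapping.single (i, j) 1 + Poly_Mapping.single (k, j) 1)"
      unfolding has_column_pair_def by blast
    ultimately show ?case
      by (simp add: var_times_var)
  next
    case (gen_add a b)
    then show ?case
      using keys_add[of a b] by auto
  next
    case (gen_mult r a)
    then show ?case
      using keys_mult[of r a] by (auto intro: has_column_pair_add)
  qed
  with assms(2) show ?thesis
    by blast
qed

lemma single_mem_Q_ideal:
  assumes "has_column_pair m" "valid_mono n m"
  shows "Poly_Mapping.single m c \<in> Q_ideal n"
proof -
  obtain i k j where le: "\<And>v. Poly_Mapping.lookup
      (Poly_Mapping.single (i, j) 1 + Poly_Mapping.single (k, j) 1) v \<le> Poly_Mapping.lookup m v"
    using assms(1) unfolding has_column_pair_def by blast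
  define g where "g = Poly_Mapping.single (i, j) 1 + Poly_Mapping.single (k, j) (1::nat)"
  have "(i, j) \<in> Poly_Mapping.keys m" "(k, j) \<in> Poly_Mapping.keys m"
    using le[of "(i, j)"] le[of "(k, j)"] by (auto simp: lookup_add lookup_single in_keys_iff)
  then have "1 \<le> i \<and> i \<le> n \<and> 1 \<le> j" "1 \<le> k \<and> k \<le> n"
    using assms(2) unfolding valid_mono_def by force+
  then have generator: "var i j * var k j \<in> Q_ideal n"
    unfolding Q_ideal_def by (intro gen_base) blast
  have m_eq: "(m - g) + g = m"
  proof (rule poly_mapping_eqI)
    fix v
    show "Poly_Mapping.lookup (m - g + g) v = Poly_Mapping.lookup m v"
      using le[of v] by (simp add: lookup_add lookup_minus g_def)
  qed
  have "valid_mono n (m - g)"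
    using assms(2) unfolding valid_mono_def by (auto simp: in_keys_iff lookup_minus)
  then have cofactor: "Poly_Mapping.single (m - g) c \<in> P_set n"
    by (simp add: P_set_eq)
  have "Poly_Mapping.single m c = Poly_Mapping.single ((m - g) + g) c"
    by (simp only: m_eq)
  also have "\<dots> = Poly_Mapping.single (m - g) c * (var i j * var k j)"
    by (simp add: var_times_var mult_single g_def)
  also have "\<dots> \<in> Q_ideal n"
    using cofactor generator unfolding Q_ideal_def by (rule gen_mult)
  finally show ?thesis .
qed

lemma sum_mem_Q_ideal: "(\<And>a. a \<in> A \<Longrightarrow> g a \<in> Q_ideal n) \<Longrightarrow> sum g A \<in> Q_ideal n"
  unfolding Q_ideal_def
  by (induction A rule: infinite_finite_induct) (auto intro: gen_add gen_zero)

lemma word_mono_no_column_pair: "\<not> has_column_pair (word_mono w)"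
proof
  assume "has_column_pair (word_mono w)"
  then obtain i k j where le: "\<And>v. Poly_Mapping.lookup
      (Poly_Mapping.single (i, j) 1 + Poly_Mapping.single (k, j) 1) v
      \<le> Poly_Mapping.lookup (word_mono w) v"
    unfolding has_column_pair_def by blast
  show False
  proof (cases "i = k")
    case True
    then show False
      using le[of "(i, j)"] by (simp add: lookup_add lookup_word_mono split: if_splits)
  next
    case False
    then show False
      using le[of "(i, j)"] le[of "(k, j)"]
      by (simp add: lookup_add lookup_single lookup_word_mono split: if_splits)
  qed
qed

lemma lookup_le_1_if_no_column_pair:
  assumes "\<not> has_column_pair m"
  shows "Poly_Mapping.lookup m v \<le> 1"
proof (rule ccontr)
  assume "\<not> ?thesis"
  then have "has_column_pair m"
    unfolding has_column_pair_def
    by (intro exI[of _ "fst v"] exI[of _ "fst v"] exI[of _ "snd v"] allI)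
      (auto simp: lookup_add lookup_single when_def)
  with assms show False ..
qed

lemma inj_on_snd_keys_if_no_column_pair:
  assumes "\<not> has_column_pair m"
  shows "inj_on snd (Poly_Mapping.keys m)"
proof (rule inj_onI, rule ccontr)
  fix x y assume xy: "x \<in> Poly_Mapping.keys m" "y \<in> Poly_Mapping.keys m" "snd x = snd y" "x \<noteq> y"
  have "has_column_pair m"
    unfolding has_column_pair_def
  proof (intro exI allI)
    fix u
    show "Poly_Mapping.lookup (Poly_Mapping.single (fst x, snd x) 1
        + Poly_Mapping.single (fst y, snd x) 1) u \<le> Poly_Mapping.lookup m u"
      using xy by (cases x, cases y, cases u) (auto simp: lookup_add lookup_single when_def in_keys_iff)
  qed
  with assms show False ..
qed

lemma no_column_pair_imp_word_mono:
  assumes valid: "valid_mono n m" and columns: "\<forall>v\<in>Poly_Mapping.keys m. snd v \<le> d"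
    and no_pair: "\<not> has_column_pair m" and deg: "mono_deg m = d"
  obtains w where "length w = d" "m = word_mono w"
proof -
  have column_unique: "x = y"
    if "x \<in> Poly_Mapping.keys m" "y \<in> Poly_Mapping.keys m" "snd x = snd y" for x y
    using inj_on_snd_keys_if_no_column_pair[OF no_pair] that by (auto dest: inj_onD)
  have one: "Poly_Mapping.lookup m v = 1" if "v \<in> Poly_Mapping.keys m" for v
    using lookup_le_1_if_no_column_pair[OF no_pair, of v] that by (simp add: in_keys_iff)
  have "card (Poly_Mapping.keys m) = d"
    using deg unfolding mono_deg_def by (simp add: one)
  moreover have "inj_on snd (Poly_Mapping.keys m)"
    using no_pair by (rule inj_on_snd_keys_if_no_column_pair)
  moreover have snd_keys: "snd ` Poly_Mapping.keys m \<subseteq> {1..d}"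
    using valid columns unfolding valid_mono_def by fastforce
  ultimately have snd_keys_eq: "snd ` Poly_Mapping.keys m = {1..d}"
    by (intro card_subset_eq) (simp_all add: card_image)
  define w where "w = map (\<lambda>j. fst (THE x. x \<in> Poly_Mapping.keys m \<and> snd x = Suc j)) [0..<d]"
  have length_w: "length w = d"
    by (simp add: w_def)
  have w_nth: "w ! (j - 1) = i" if "(i, j) \<in> Poly_Mapping.keys m" for i j
  proof -
    have j: "1 \<le> j" "j \<le> d"
      using that snd_keys by auto
    have "(THE x. x \<in> Poly_Mapping.keys m \<and> snd x = j) = (i, j)"
      using that column_unique by (intro the_equality) auto
    moreover have "j - 1 < d" "Suc (j - 1) = j"
      using j by simp_all
    ultimately show ?thesis
      by (simp add: w_def)
  qed
  have keys_m: "(i, j) \<in> Poly_Mapping.keys m \<longleftrightarrow> 1 \<le> j \<and> j \<le> d \<and> w ! (j - 1) = i" for i j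
  proof
    assume "(i, j) \<in> Poly_Mapping.keys m"
    then show "1 \<le> j \<and> j \<le> d \<and> w ! (j - 1) = i"
      using w_nth[of i j] snd_keys by force
  next
    assume "1 \<le> j \<and> j \<le> d \<and> w ! (j - 1) = i"
    then obtain i' where "(i', j) \<in> Poly_Mapping.keys m" "w ! (j - 1) = i"
      using snd_keys_eq by (metis atLeastAtMost_iff image_iff prod.collapse)
    then show "(i, j) \<in> Poly_Mapping.keys m"
      using w_nth by auto
  qed
  have "m = word_mono w"
  proof (rule poly_mapping_eqI)
    fix v :: "nat \<times> nat"
    have "Poly_Mapping.lookup m v = (if v \<in> Poly_Mapping.keys m then 1 else 0)"
      using one[of v] by (cases "v \<in> Poly_Mapping.keys m") (simp_all add: in_keys_iff)
    also have "\<dots> = Poly_Mapping.lookup (word_mono w) v"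
      using keys_m[of "fst v" "snd v"] by (simp add: lookup_word_mono length_w)
    finally show "Poly_Mapping.lookup m v = Poly_Mapping.lookup (word_mono w) v" .
  qed
  with length_w show ?thesis
    by (rule that)
qed

section \<open>The free algebra and \<open>\<iota>\<close>\<close>

lemma fmul_single_left: "fmul (Poly_Mapping.single u c) f = push_keys ((@) u) c f"
  by (cases "c = 0") (simp_all add: fmul_def push_keys_def)

lemma fmul_single_right: "fmul f (Poly_Mapping.single u c) = push_keys (\<lambda>y. y @ u) c f"
  by (cases "c = 0") (simp_all add: fmul_def push_keys_def mult.commute)

lemma lookup_F_component:
  "Poly_Mapping.lookup (F_component e g) w = (if length w = e then Poly_Mapping.lookup g w else 0)"
  unfolding F_component_def lookup_sum lookup_single
  by (cases "w \<in> Poly_Mapping.keys g") (auto simp: when_def in_keys_iff)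

lemma keys_F_component:
  "Poly_Mapping.keys (F_component e g) = {w \<in> Poly_Mapping.keys g. length w = e}"
  by (auto simp: in_keys_iff lookup_F_component split: if_splits)

lemma push_keys_F_component_mem_ideal_deg:
  assumes I: "graded_ideal_F n I" and "g \<in> I" and "set u \<subseteq> {1..n}" "set u' \<subseteq> {1..n}"
  shows "push_keys (\<lambda>y. u @ y @ u') c (F_component e g) \<in> ideal_deg I (length u + e + length u')"
proof -
  let ?h = "push_keys (\<lambda>y. u @ y @ u') c (F_component e g)"
  have component: "F_component e g \<in> I"
    using I \<open>g \<in> I\<close> unfolding graded_ideal_F_def by blast
  have "?h = fmul (fmul (Poly_Mapping.single u c) (F_component e g)) (Poly_Mapping.single u' 1)"
    by (simp add: fmul_single_left fmul_single_right push_keys_compose inj_def comp_def)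
  also have "\<dots> \<in> I"
    using I component assms(3,4) unfolding graded_ideal_F_def by (simp add: F_set_def)
  finally have "?h \<in> I" .
  moreover have "F_homog (length u + e + length u') ?h"
    unfolding F_homog_def
    using keys_push_keys_subset[of "\<lambda>y. u @ y @ u'" c "F_component e g"]
    by (auto simp: keys_F_component)
  ultimately show ?thesis
    by (simp add: ideal_deg_def)
qed

lemma lookup_iota_word_mono: "Poly_Mapping.lookup (iota f) (word_mono w) = Poly_Mapping.lookup f w"
  by (simp add: iota_eq_push_keys lookup_push_keys_image[OF inj_word_mono])

lemma funpow_sigma_iota: "(sigma ^^ k) (iota g) = push_keys ((mono_shift ^^ k) \<circ> word_mono) 1 g"
  by (simp add: funpow_sigma_eq_push_keys iota_eq_push_keys push_keys_compose
      inj_funpow_mono_shift inj_word_mono)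

lemma iota_homogeneous:
  assumes "f \<in> F_set n" "F_homog d f"
  shows "iota f \<in> Pd_set n d" "P_homog d (iota f)"
proof -
  have words: "m \<in> word_mono ` {w \<in> Poly_Mapping.keys f. set w \<subseteq> {1..n} \<and> length w = d}"
    if "m \<in> Poly_Mapping.keys (iota f)" for m
    using that keys_push_keys_subset[of word_mono 1 f] assms
    by (auto simp: iota_eq_push_keys F_set_def F_homog_def)
  show "iota f \<in> Pd_set n d"
    using words by (fastforce simp: Pd_set_def P_set_eq valid_mono_word_mono keys_word_mono)
  show "P_homog d (iota f)"
    using words by (force simp: P_homog_def mono_deg_word_mono simp flip: mono_deg_def)
qed

lemma iota_ideal_deg_add:
  assumes "graded_ideal_F n I" "x \<in> iota ` ideal_deg I d" "y \<in> iota ` ideal_deg I d"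
  shows "x + y \<in> iota ` ideal_deg I d"
proof -
  obtain a b where ab: "a \<in> ideal_deg I d" "b \<in> ideal_deg I d" "x = iota a" "y = iota b"
    using assms(2,3) by blast
  then have "a + b \<in> ideal_deg I d"
    using assms(1) keys_add[of a b]
    unfolding graded_ideal_F_def ideal_deg_def F_homog_def by blast
  moreover have "iota (a + b) = x + y"
    by (simp add: ab iota_eq_push_keys push_keys_add[OF inj_word_mono])
  ultimately show ?thesis
    by (metis image_eqI)
qed

lemma zero_mem_iota_ideal_deg: "graded_ideal_F n I \<Longrightarrow> 0 \<in> iota ` ideal_deg I d"
  using image_eqI[of 0 iota 0 "ideal_deg I d"]
  by (simp add: graded_ideal_F_def ideal_deg_def F_homog_def iota_def)

lemma sum_mem_iota_ideal_deg:
  assumes "graded_ideal_F n I" "\<And>a. a \<in> A \<Longrightarrow> g a \<in> iota ` ideal_deg I d"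
  shows "sum g A \<in> iota ` ideal_deg I d"
  using assms(2)
  by (induction A rule: infinite_finite_induct)
    (auto intro: iota_ideal_deg_add[OF assms(1)] zero_mem_iota_ideal_deg[OF assms(1)])

section \<open>The word part of a polynomial\<close>

definition word_monos :: "nat \<Rightarrow> ((nat \<times> nat) \<Rightarrow>\<^sub>0 nat) set" where
  "word_monos d = word_mono ` {w. length w = d}"

lemma restrict_word_monos_Q_ideal:
  assumes "q \<in> Q_ideal n"
  shows "restrict_keys (word_monos d) q = 0"
proof (rule poly_mapping_eqI)
  fix m
  have "m \<notin> Poly_Mapping.keys q" if "m \<in> word_monos d"
    using that keys_Q_ideal_has_column_pair[OF assms] word_mono_no_column_pair
    by (auto simp: word_monos_def)
  then show "Poly_Mapping.lookup (restrict_keys (word_monos d) q) m = Poly_Mapping.lookup 0 m"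
    by (auto simp: lookup_restrict_keys in_keys_iff)
qed

text \<open>If \<open>x\<^sup>m \<sigma>\<^sup>k(\<iota>(w\<^sub>0))\<close> is the word monomial \<open>\<iota>(v)\<close>, then \<open>w\<^sub>0\<close> occupies the positions
  \<open>k+1, \<dots>, k+|w\<^sub>0|\<close> of \<open>v\<close> and \<open>x\<^sup>m\<close> supplies the rest.\<close>

lemma word_mono_eq_times_shifted_word_mono:
  assumes eq: "m + (mono_shift ^^ k) (word_mono w0) = word_mono v"
  obtains u u' where "v = u @ w0 @ u'"
    "\<And>w. length w = length w0 \<Longrightarrow> m + (mono_shift ^^ k) (word_mono w) = word_mono (u @ w @ u')"
proof (cases "w0 = []")
  case True
  with eq show ?thesis
    by (intro that[of v "[]"]) auto
next
  case False
  have position: "k + i < length v \<and> v ! (k + i) = w0 ! i" if "i < length w0" for i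
  proof -
    have "Poly_Mapping.lookup ((mono_shift ^^ k) (word_mono w0)) (w0 ! i, Suc (k + i)) = 1"
      using that by (simp add: lookup_funpow_mono_shift lookup_word_mono)
    then have "Poly_Mapping.lookup (word_mono v) (w0 ! i, Suc (k + i)) \<ge> 1"
      by (simp add: lookup_add flip: eq)
    then show ?thesis
      by (simp add: lookup_word_mono split: if_splits)
  qed
  define u where "u = take k v"
  define u' where "u' = drop (k + length w0) v"
  have fits: "k + length w0 \<le> length v"
    using position[of "length w0 - 1"] False by (cases w0) auto
  then have length_u: "length u = k"
    by (simp add: u_def)
  have "take (length w0) (drop k v) = w0"
    using position fits by (intro nth_equalityI) auto
  then have v_eq: "v = u @ w0 @ u'"
    unfolding u_def u'_def by (metis append_take_drop_id drop_drop add.commute)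
  have word_mono_context: "word_mono (u @ w @ u') =
      word_mono u + (mono_shift ^^ k) (word_mono w) + (mono_shift ^^ (k + length w)) (word_mono u')"
    for w
    by (simp add: word_mono_append length_u funpow_mono_shift_add funpow_add add.assoc)
  have "m + (mono_shift ^^ k) (word_mono w0) =
      word_mono u + (mono_shift ^^ (k + length w0)) (word_mono u') + (mono_shift ^^ k) (word_mono w0)"
    using eq word_mono_context[of w0] by (simp add: v_eq add_ac)
  then have "m = word_mono u + (mono_shift ^^ (k + length w0)) (word_mono u')"
    by simp
  with v_eq show ?thesis
    by (intro that[of u u']) (simp_all add: word_mono_context add_ac)
qed

lemma times_shifted_word_mono_in_word_monosE:
  assumes m: "valid_mono n m" and w0: "set w0 \<subseteq> {1..n}"
    and v: "length v = d" "m + (mono_shift ^^ k) (word_mono w0) = word_mono v"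
  obtains u u' where "set u \<subseteq> {1..n}" "set u' \<subseteq> {1..n}" "length u + length w0 + length u' = d"
    "\<And>w. m + (mono_shift ^^ k) (word_mono w) \<in> word_monos d \<longleftrightarrow> length w = length w0"
    "\<And>w. length w = length w0 \<Longrightarrow> m + (mono_shift ^^ k) (word_mono w) = word_mono (u @ w @ u')"
proof -
  let ?mono = "\<lambda>w. m + (mono_shift ^^ k) (word_mono w)"
  obtain u u' where v_eq: "v = u @ w0 @ u'"
    and in_context: "\<And>w. length w = length w0 \<Longrightarrow> ?mono w = word_mono (u @ w @ u')"
    using word_mono_eq_times_shifted_word_mono[OF v(2)] by blast
  have "valid_mono n (?mono w0)"
    using m w0 by (simp add: valid_mono_add valid_mono_funpow_mono_shift valid_mono_word_mono)
  then have "valid_mono n (word_mono v)"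
    by (simp only: v(2))
  then have letters: "set u \<subseteq> {1..n}" "set u' \<subseteq> {1..n}"
    by (simp_all add: valid_mono_word_mono v_eq)
  have deg_mono: "mono_deg (?mono w) = mono_deg m + length w" for w
    by (simp add: mono_deg_add mono_deg_funpow_mono_shift mono_deg_word_mono)
  have deg_m: "mono_deg m + length w0 = d"
    using arg_cong[OF v(2), of mono_deg] v(1) by (simp add: deg_mono mono_deg_word_mono)
  have "?mono w \<in> word_monos d \<longleftrightarrow> length w = length w0" for w
  proof
    assume "?mono w \<in> word_monos d"
    then obtain v' where "length v' = d" "?mono w = word_mono v'"
      by (auto simp: word_monos_def)
    then have "mono_deg m + length w = d"
      using deg_mono[of w] by (simp add: mono_deg_word_mono)
    with deg_m show "length w = length w0"
      by simp
  next
    assume "length w = length w0"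
    then show "?mono w \<in> word_monos d"
      using in_context[of w] v v_eq by (auto simp: word_monos_def)
  qed
  moreover have "length u + length w0 + length u' = d"
    using v v_eq by simp
  ultimately show ?thesis
    using that letters in_context by blast
qed

lemma restrict_word_monos_generator:
  assumes I: "graded_ideal_F n I" and "g \<in> I" and m: "valid_mono n m"
  shows "restrict_keys (word_monos d) (Poly_Mapping.single m c * (sigma ^^ k) (iota g))
           \<in> iota ` ideal_deg I d"
proof -
  let ?mono = "\<lambda>w. m + (mono_shift ^^ k) (word_mono w)"
  define T where "T = {w \<in> Poly_Mapping.keys g. ?mono w \<in> word_monos d}"
  have "restrict_keys (word_monos d) (Poly_Mapping.single m c * (sigma ^^ k) (iota g)) =
      (\<Sum>w\<in>T. Poly_Mapping.single (?mono w) (c * Poly_Mapping.lookup g w))"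
    by (simp add: funpow_sigma_iota push_keys_def sum_distrib_left mult_single
        restrict_keys_sum restrict_keys_single sum.inter_filter T_def)
  also have "\<dots> \<in> iota ` ideal_deg I d"
  proof (cases "T = {}")
    case True
    then show ?thesis
      using zero_mem_iota_ideal_deg[OF I] by simp
  next
    case False
    then obtain w0 v where w0: "w0 \<in> Poly_Mapping.keys g" and v: "length v = d" "?mono w0 = word_mono v"
      by (auto simp: T_def word_monos_def)
    have "set w0 \<subseteq> {1..n}"
      using w0 \<open>g \<in> I\<close> I by (auto simp: graded_ideal_F_def F_set_def)
    then obtain u u' where letters: "set u \<subseteq> {1..n}" "set u' \<subseteq> {1..n}"
      and length: "length u + length w0 + length u' = d"
      and in_word_monos: "\<And>w. ?mono w \<in> word_monos d \<longleftrightarrow> length w = length w0"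
      and in_context: "\<And>w. length w = length w0 \<Longrightarrow> ?mono w = word_mono (u @ w @ u')"
      using times_shifted_word_mono_in_word_monosE[OF m _ v] by blast
    have T_eq: "T = {w \<in> Poly_Mapping.keys g. length w = length w0}"
      by (simp add: T_def in_word_monos)
    let ?h = "push_keys (\<lambda>y. u @ y @ u') c (F_component (length w0) g)"
    have h_mem: "?h \<in> ideal_deg I d"
      using push_keys_F_component_mem_ideal_deg[OF I \<open>g \<in> I\<close> letters, of c "length w0"]
      by (simp only: length)
    have "iota ?h = push_keys (word_mono \<circ> (\<lambda>y. u @ y @ u')) c (F_component (length w0) g)"
      using push_keys_compose[OF inj_word_mono, of "\<lambda>y. u @ y @ u'" 1 c]
      by (simp add: iota_eq_push_keys inj_def)
    also have "\<dots> = (\<Sum>w\<in>T. Poly_Mapping.single (?mono w) (c * Poly_Mapping.lookup g w))"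
      unfolding push_keys_def keys_F_component T_eq
      by (intro sum.cong) (simp_all add: lookup_F_component in_context)
    finally show ?thesis
      using h_mem by (metis image_eqI)
  qed
  finally show ?thesis .
qed

lemma restrict_word_monos_L_preimage:
  assumes I: "graded_ideal_F n I" and "a \<in> L_preimage n I"
  shows "\<forall>r\<in>P_set n. restrict_keys (word_monos d) (r * a) \<in> iota ` ideal_deg I d"
  using assms(2) unfolding L_preimage_def
proof induction
  case gen_zero
  then show ?case
    using zero_mem_iota_ideal_deg[OF I] by simp
next
  case (gen_base s)
  show ?case
  proof
    fix r :: "'a lpoly" assume r: "r \<in> P_set n"
    show "restrict_keys (word_monos d) (r * s) \<in> iota ` ideal_deg I d"
    proof (cases "s \<in> Q_ideal n")
      case True
      then have "r * s \<in> Q_ideal n"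
        using r unfolding Q_ideal_def by (rule gen_mult[rotated])
      then show ?thesis
        using zero_mem_iota_ideal_deg[OF I] by (simp add: restrict_word_monos_Q_ideal)
    next
      case False
      then obtain k g where "g \<in> I" "s = (sigma ^^ k) (iota g)"
        using gen_base by blast
      have "restrict_keys (word_monos d) (r * s) = (\<Sum>m\<in>Poly_Mapping.keys r.
          restrict_keys (word_monos d) (Poly_Mapping.single m (Poly_Mapping.lookup r m) * s))"
        by (subst poly_mapping_sum_single[of r]) (simp add: sum_distrib_right restrict_keys_sum)
      also have "\<dots> \<in> iota ` ideal_deg I d"
        using r \<open>g \<in> I\<close> unfolding \<open>s = (sigma ^^ k) (iota g)\<close>
        by (intro sum_mem_iota_ideal_deg[OF I] restrict_word_monos_generator[OF I])
          (simp_all add: P_set_eq)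
      finally show ?thesis .
    qed
  qed
next
  case (gen_add a b)
  then show ?case
    by (simp add: distrib_left restrict_keys_add iota_ideal_deg_add[OF I])
next
  case (gen_mult r' a)
  show ?case
  proof
    fix r :: "'a lpoly" assume "r \<in> P_set n"
    then have "r * r' \<in> P_set n"
      using gen_mult.hyps(1) by (rule P_set_mult)
    then show "restrict_keys (word_monos d) (r * (r' * a)) \<in> iota ` ideal_deg I d"
      using gen_mult.IH by (simp add: mult.assoc[symmetric])
  qed
qed

section \<open>Degree \<open>d\<close> parts of \<open>I\<close> and \<open>L(I)\<close>\<close>

lemma diff_restrict_word_monos_mem_Q_ideal:
  assumes "p \<in> P_set n"
    and "q \<in> Pd_set n d" "p - q \<in> Q_ideal n"
    and "P_homog d q'" "p - q' \<in> Q_ideal n"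
  shows "p - restrict_keys (word_monos d) p \<in> Q_ideal n"
  unfolding diff_restrict_keys unfolding restrict_keys_eq_sum
proof (rule sum_mem_Q_ideal)
  fix m assume "m \<in> {m \<in> Poly_Mapping.keys p. m \<in> - word_monos d}"
  then have m: "m \<in> Poly_Mapping.keys p" "m \<notin> word_monos d"
    by auto
  have valid: "valid_mono n m"
    using assms(1) m(1) by (simp add: P_set_eq)
  have "has_column_pair m"
  proof (rule ccontr)
    assume no_pair: "\<not> has_column_pair m"
    have "m \<in> Poly_Mapping.keys q" "m \<in> Poly_Mapping.keys q'"
      using m(1) no_pair keys_Q_ideal_has_column_pair[OF assms(3)]
        keys_Q_ideal_has_column_pair[OF assms(5)]
      by (auto simp: in_keys_iff lookup_minus)
    then have "\<forall>v\<in>Poly_Mapping.keys m. snd v \<le> d" "mono_deg m = d"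
      using assms(2,4) by (auto simp: Pd_set_def P_homog_def mono_deg_def)
    then obtain w where "length w = d" "m = word_mono w"
      using no_column_pair_imp_word_mono[OF valid _ no_pair] by blast
    with m(2) show False
      by (simp add: word_monos_def)
  qed
  then show "Poly_Mapping.single m (Poly_Mapping.lookup p m) \<in> Q_ideal n"
    using valid by (rule single_mem_Q_ideal)
qed

lemma iota_eq_mod_Q_ideal_imp_eq:
  assumes "iota f - iota g \<in> Q_ideal n"
  shows "f = g"
proof (rule poly_mapping_eqI)
  fix w
  have "word_mono w \<notin> Poly_Mapping.keys (iota f - iota g)"
    using keys_Q_ideal_has_column_pair[OF assms] word_mono_no_column_pair by blast
  then show "Poly_Mapping.lookup f w = Poly_Mapping.lookup g w"
    by (simp add: in_keys_iff lookup_minus lookup_iota_word_mono)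
qed

lemma L_preimage_add_Q_ideal:
  assumes "f \<in> I" "p - iota f \<in> Q_ideal n"
  shows "p \<in> L_preimage n I"
proof -
  have "iota f \<in> (sigma ^^ 0) ` iota ` I"
    using assms(1) by simp
  then have "iota f + (p - iota f) \<in> L_preimage n I"
    using assms(2) unfolding L_preimage_def by (blast intro: gen_add gen_base)
  then show ?thesis
    by simp
qed

theorem mainTheorem5:
  fixes n :: nat and I :: "'k::field freealg set" and d :: nat
  assumes "graded_ideal_F n I"
  shows "(\<forall>p \<in> P_set n.
           (\<exists>f \<in> ideal_deg I d. p - iota f \<in> Q_ideal n)
           \<longleftrightarrow>
           (p \<in> L_preimage n I
            \<and> (\<exists>q \<in> Pd_set n d. p - q \<in> Q_ideal n)
            \<and> (\<exists>q \<in> P_set n. P_homog d q \<and> p - q \<in> Q_ideal n)))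
         \<and> (\<forall>f \<in> ideal_deg I d. \<forall>g \<in> ideal_deg I d. iota f - iota g \<in> Q_ideal n \<longrightarrow> f = g)"
proof (rule conjI; intro ballI iffI impI)
  fix p assume "p \<in> P_set n" and "\<exists>f\<in>ideal_deg I d. p - iota f \<in> Q_ideal n"
  then obtain f where f: "f \<in> ideal_deg I d" "p - iota f \<in> Q_ideal n"
    by blast
  then have "f \<in> F_set n" "F_homog d f"
    using assms by (auto simp: ideal_deg_def graded_ideal_F_def)
  then have "iota f \<in> Pd_set n d" "P_homog d (iota f)"
    by (simp_all add: iota_homogeneous)
  with f show "p \<in> L_preimage n I \<and> (\<exists>q \<in> Pd_set n d. p - q \<in> Q_ideal n)
      \<and> (\<exists>q \<in> P_set n. P_homog d q \<and> p - q \<in> Q_ideal n)"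
    using L_preimage_add_Q_ideal by (auto simp: ideal_deg_def Pd_set_def)
next
  fix p assume p: "p \<in> P_set n" and "p \<in> L_preimage n I \<and> (\<exists>q \<in> Pd_set n d. p - q \<in> Q_ideal n)
      \<and> (\<exists>q \<in> P_set n. P_homog d q \<and> p - q \<in> Q_ideal n)"
  then obtain q q' where "p \<in> L_preimage n I" "q \<in> Pd_set n d" "p - q \<in> Q_ideal n"
    "P_homog d q'" "p - q' \<in> Q_ideal n"
    by blast
  moreover from this(1) obtain f where "f \<in> ideal_deg I d" "iota f = restrict_keys (word_monos d) p"
    using restrict_word_monos_L_preimage[OF assms, of p d] P_set_one by fastforce
  ultimately show "\<exists>f\<in>ideal_deg I d. p - iota f \<in> Q_ideal n"
    using diff_restrict_word_monos_mem_Q_ideal[OF p] by metis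
qed (rule iota_eq_mod_Q_ideal_imp_eq)

end
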